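(* The optimal value $\rho$ of the linear program $$\rho=\inf_{v\in\mathscr C(\mathcal Q)}\int_{\mathcal Q} v(q)\,dq\quad\text{s.t. } v(q)-x\ge 0\ \text{for all }(q,x,y)\in\mathcal Z$$ (equivalently, the optimal value of its dual $\sup_{\mu\in\mathscr M^+(\mathcal Z)}\int_{\mathcal Z}x\,d\mu$ subject to $\int_{\mathcal Z}q^\alpha d\mu=\int_{\mathcal Q}q^\alpha dq$ for all $\alpha\in\mathbb N^n$) equals $\int_{\mathcal Q} a(q)\,dq$.
   Context: Let $n\ge1$, $\mathcal Q=[-1,1]^n$, and $dq$ denote Lebesgue measure. Let $m\ge1$ and $p(q,s)=\sum_{k=0}^m p_k(q)s^k$ with $p_k\in\mathbb R[q]$ and $p_m\equiv1$, where $q\in\mathcal Q$, $s\in\mathbb C$. The abscissa is $a(q)=\max\{\Re(s): s\in\mathbb C,\ p(q,s)=0\}$ for $q\in\mathcal Q$ (a continuous function). Writing $s=x+iy$, define $p_\Re,p_\Im\in\mathbb R[q,x,y]$ by $p(q,x+iy)=p_\Re(q,x,y)+i\,p_\Im(q,x,y)$, and $\mathcal Z=\{(q,x,y): q\in\mathcal Q,\ p_\Re(q,x,y)=p_\Im(q,x,y)=0\}$. $\mathscr C(\mathcal Q)$ denotes continuous real functions on $\mathcal Q$, $\mathscr M^+(\mathcal Z)$ finite nonnegative Borel measures supported on $\mathcal Z$, $q^\alpha=q_1^{\alpha_1}\cdots q_n^{\alpha_n}$. *)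

theory Defs
  imports "HOL-Analysis.Analysis"
begin

definition Qbox :: "(real ^ 'n) set" where
  "Qbox = {q. \<forall>i. -1 \<le> q $ i \<and> q $ i \<le> 1}"

definition mpoly_fun :: "(real ^ 'n \<Rightarrow> real) \<Rightarrow> bool" where
  "mpoly_fun f \<longleftrightarrow> (\<exists>A c. finite (A :: (nat ^ 'n) set) \<and>
      f = (\<lambda>q. \<Sum>\<alpha>\<in>A. c \<alpha> * (\<Prod>i\<in>UNIV. q $ i ^ (\<alpha> $ i))))"

definition pval :: "(nat \<Rightarrow> real ^ 'n \<Rightarrow> real) \<Rightarrow> nat \<Rightarrow> real ^ 'n \<Rightarrow> complex \<Rightarrow> complex" where
  "pval P m q s = (\<Sum>k\<le>m. complex_of_real (P k q) * s ^ k)"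

definition abscissa :: "(nat \<Rightarrow> real ^ 'n \<Rightarrow> real) \<Rightarrow> nat \<Rightarrow> real ^ 'n \<Rightarrow> real" where
  "abscissa P m q = Max {Re s | s. pval P m q s = 0}"

definition pRe :: "(nat \<Rightarrow> real ^ 'n \<Rightarrow> real) \<Rightarrow> nat \<Rightarrow> real ^ 'n \<Rightarrow> real \<Rightarrow> real \<Rightarrow> real" where
  "pRe P m q x y = Re (pval P m q (Complex x y))"
definition pIm :: "(nat \<Rightarrow> real ^ 'n \<Rightarrow> real) \<Rightarrow> nat \<Rightarrow> real ^ 'n \<Rightarrow> real \<Rightarrow> real \<Rightarrow> real" where
  "pIm P m q x y = Im (pval P m q (Complex x y))"

definition Zset :: "(nat \<Rightarrow> real ^ 'n \<Rightarrow> real) \<Rightarrow> nat \<Rightarrow> ((real ^ 'n) \<times> real \<times> real) set" where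
  "Zset P m = {(q, x, y). q \<in> Qbox \<and> pRe P m q x y = 0 \<and> pIm P m q x y = 0}"

definition rho :: "(nat \<Rightarrow> real ^ 'n \<Rightarrow> real) \<Rightarrow> nat \<Rightarrow> real" where
  "rho P m = Inf {integral Qbox v | v. continuous_on Qbox v \<and>
                    (\<forall>(q, x, y) \<in> Zset P m. v q - x \<ge> 0)}"

end

theory Submission
  imports Defs "HOL-Computational_Algebra.Fundamental_Theorem_Algebra"
begin

text \<open>
  Everything rests on one estimate: a monic complex polynomial of degree m whose modulus
  at s is below e^m has a root within distance e of s, since that modulus is the product
  of the distances from s to the m roots. For q near q0, a root of p(q0,.) is thus close
  to a root of p(q,.), and conversely, because the roots stay in a fixed disc (Cauchy's
  bound); so the abscissa a is continuous on the box. Hence a is itself feasible for the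
  linear program, while every feasible v dominates a pointwise because a(q) is the real
  part of a root of p(q,.): the infimum is attained at v = a.
\<close>

lemma monic_poly_near_root:
  fixes p :: "complex poly"
  assumes "lead_coeff p = 1" and "e > 0" and "norm (poly p s) < e ^ degree p"
  shows "\<exists>r. poly p r = 0 \<and> norm (s - r) < e"
proof (rule ccontr)
  assume no_near_root: "\<not> ?thesis"
  obtain root where decomp: "smult (lead_coeff p) (\<Prod>i<degree p. [:-root i, 1:]) = p"
    using complex_poly_decompose' by blast
  have poly_p: "poly p z = (\<Prod>i<degree p. z - root i)" for z
    by (subst decomp [symmetric]) (simp add: assms(1) poly_prod)
  have "poly p (root i) = 0" if "i < degree p" for i
    unfolding poly_p using that by (intro prod_zero) auto
  then have far: "e \<le> norm (s - root i)" if "i < degree p" for i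
    using no_near_root that by (meson not_less)
  have "e ^ degree p = (\<Prod>i<degree p. e)"
    by simp
  also have "\<dots> \<le> (\<Prod>i<degree p. norm (s - root i))"
    using far \<open>e > 0\<close> by (intro prod_mono) auto
  also have "\<dots> = norm (poly p s)"
    by (simp add: poly_p prod_norm)
  finally show False
    using assms(3) by simp
qed

lemma root_norm_le_coeff_sum:
  fixes c :: "nat \<Rightarrow> 'a :: real_normed_field"
  assumes "c m = 1" and "(\<Sum>k\<le>m. c k * s ^ k) = 0"
  shows "norm s \<le> max 1 (\<Sum>k<m. norm (c k))"
proof (rule ccontr)
  assume "\<not> ?thesis"
  then have s_gt_1: "norm s > 1" and s_gt_sum: "norm s > (\<Sum>k<m. norm (c k))"
    by auto
  obtain m' where m': "m = Suc m'"
    using assms by (cases m) auto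
  have "(\<Sum>k<m. c k * s ^ k) + s ^ m = 0"
    using assms unfolding m' sum.atMost_Suc lessThan_Suc_atMost by simp
  then have "s ^ m = - (\<Sum>k<m. c k * s ^ k)"
    by (simp add: eq_neg_iff_add_eq_0 add.commute)
  then have "norm s ^ m = norm (\<Sum>k<m. c k * s ^ k)"
    by (metis norm_minus_cancel norm_power)
  also have "\<dots> \<le> (\<Sum>k<m. norm (c k) * norm s ^ k)"
    by (rule order_trans [OF norm_sum]) (simp add: norm_mult norm_power)
  also have "\<dots> \<le> (\<Sum>k<m. norm (c k) * norm s ^ m')"
    using s_gt_1 by (intro sum_mono mult_left_mono power_increasing) (auto simp: m')
  also have "\<dots> = (\<Sum>k<m. norm (c k)) * norm s ^ m'"
    by (simp add: sum_distrib_right)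
  finally have "norm s * norm s ^ m' \<le> (\<Sum>k<m. norm (c k)) * norm s ^ m'"
    by (simp add: m')
  moreover have "norm s ^ m' > 0"
    using s_gt_1 by (intro zero_less_power) linarith
  ultimately show False
    using s_gt_sum by (simp add: mult_le_cancel_right)
qed

definition pval_poly :: "(nat \<Rightarrow> real ^ 'n \<Rightarrow> real) \<Rightarrow> nat \<Rightarrow> real ^ 'n \<Rightarrow> complex poly" where
  "pval_poly P m q = (\<Sum>k\<le>m. monom (complex_of_real (P k q)) k)"

lemma poly_pval_poly [simp]: "poly (pval_poly P m q) = pval P m q"
  by (simp add: fun_eq_iff pval_poly_def pval_def poly_sum poly_monom)

lemma coeff_pval_poly: "coeff (pval_poly P m q) k = (if k \<le> m then complex_of_real (P k q) else 0)"
  by (simp add: pval_poly_def coeff_sum)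

lemma degree_pval_poly:
  assumes "P m q = 1"
  shows "degree (pval_poly P m q) = m" and "lead_coeff (pval_poly P m q) = 1"
proof -
  have "degree (pval_poly P m q) \<le> m"
    by (rule degree_le) (simp add: coeff_pval_poly)
  moreover have "m \<le> degree (pval_poly P m q)"
    by (rule le_degree) (simp add: coeff_pval_poly assms)
  ultimately show "degree (pval_poly P m q) = m"
    by simp
  then show "lead_coeff (pval_poly P m q) = 1"
    by (simp add: coeff_pval_poly assms)
qed

lemma pval_near_root:
  assumes "P m q = 1" and "e > 0" and "norm (pval P m q s) < e ^ m"
  shows "\<exists>r. pval P m q r = 0 \<and> norm (s - r) < e"
  using monic_poly_near_root [of "pval_poly P m q" e s] degree_pval_poly [of P m q, OF assms(1)]
    assms(2,3)
  by simp

lemma pval_root_norm_le: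
  assumes "P m q = 1" and "pval P m q s = 0"
  shows "norm s \<le> max 1 (\<Sum>k<m. \<bar>P k q\<bar>)"
  using root_norm_le_coeff_sum [of "\<lambda>k. complex_of_real (P k q)" m s] assms
  by (simp add: pval_def)

lemma pval_root_exists:
  assumes "m \<ge> 1" and "P m q = 1"
  shows "\<exists>s. pval P m q s = 0"
  using alg_closed [of m "\<lambda>k. complex_of_real (P k q)"] assms by (simp add: pval_def)

lemma finite_pval_roots:
  assumes "P m q = 1"
  shows "finite {s. pval P m q s = 0}"
proof -
  have "pval_poly P m q \<noteq> 0"
    using degree_pval_poly(2) [of P m q, OF assms] by auto
  then show ?thesis
    using poly_roots_finite by fastforce
qed

lemma abscissa_eq_Max: "abscissa P m q = Max (Re ` {s. pval P m q s = 0})"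
  unfolding abscissa_def by (simp add: setcompr_eq_image)

lemma abscissa_ge:
  assumes "P m q = 1" and "pval P m q s = 0"
  shows "Re s \<le> abscissa P m q"
  unfolding abscissa_eq_Max
proof (rule Max_ge)
  show "finite (Re ` {s. pval P m q s = 0})"
    using finite_pval_roots [of P m q, OF assms(1)] by (rule finite_imageI)
  show "Re s \<in> Re ` {s. pval P m q s = 0}"
    using assms(2) by (intro imageI) simp
qed

lemma abscissa_attained:
  assumes "m \<ge> 1" and "P m q = 1"
  obtains s where "pval P m q s = 0" and "Re s = abscissa P m q"
proof -
  have "abscissa P m q \<in> Re ` {s. pval P m q s = 0}"
    unfolding abscissa_eq_Max
    using finite_pval_roots [of P m q, OF assms(2)] pval_root_exists [of m P q, OF assms]
    by (intro Max_in) auto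
  then obtain s where "pval P m q s = 0" and "abscissa P m q = Re s"
    by (elim imageE) simp
  then show ?thesis
    by (intro that) simp_all
qed

lemma abscissa_gt_of_norm_pval_less:
  assumes "P m q = 1" and "e > 0" and "norm (pval P m q s) < e ^ m"
  shows "Re s - e < abscissa P m q"
proof -
  obtain r where r: "pval P m q r = 0" "norm (s - r) < e"
    using pval_near_root [OF assms] by blast
  have "Re s - Re r < e"
    using abs_Re_le_cmod [of "s - r"] r(2) by simp
  then show ?thesis
    using abscissa_ge [OF assms(1) r(1)] by linarith
qed

lemma norm_pval_diff_le:
  assumes "norm s \<le> R"
  shows "norm (pval P m q s - pval P m q' s) \<le> (\<Sum>k\<le>m. \<bar>P k q - P k q'\<bar> * R ^ k)"
proof -
  have "norm (pval P m q s - pval P m q' s) =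
      norm (\<Sum>k\<le>m. complex_of_real (P k q - P k q') * s ^ k)"
    unfolding pval_def by (simp add: sum_subtractf [symmetric] algebra_simps)
  also have "\<dots> \<le> (\<Sum>k\<le>m. norm (complex_of_real (P k q - P k q') * s ^ k))"
    by (rule norm_sum)
  also have "\<dots> \<le> (\<Sum>k\<le>m. \<bar>P k q - P k q'\<bar> * R ^ k)"
    using assms
    by (intro sum_mono) (simp add: norm_mult norm_power mult_left_mono power_mono flip: of_real_diff)
  finally show ?thesis .
qed

lemma continuous_on_pval:
  assumes "\<And>k. k \<le> m \<Longrightarrow> continuous_on S (P k)"
  shows "continuous_on S (\<lambda>q. pval P m q s)"
  unfolding pval_def using assms by (intro continuous_intros) auto

lemma abscissa_eventually_gt:
  assumes "m \<ge> 1" and monic: "\<And>q. P m q = 1"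
    and cont: "\<And>k. k \<le> m \<Longrightarrow> continuous_on S (P k)" and "q0 \<in> S" and "e > 0"
  shows "eventually (\<lambda>q. abscissa P m q0 - e < abscissa P m q) (at q0 within S)"
proof -
  obtain s0 where s0: "pval P m q0 s0 = 0" "Re s0 = abscissa P m q0"
    using abscissa_attained [of m P q0, OF assms(1) monic] by blast
  have "continuous_on S (\<lambda>q. pval P m q s0)"
    using cont by (rule continuous_on_pval)
  then have "((\<lambda>q. pval P m q s0) \<longlongrightarrow> 0) (at q0 within S)"
    using \<open>q0 \<in> S\<close> s0(1) unfolding continuous_on_def by metis
  then have "((\<lambda>q. norm (pval P m q s0)) \<longlongrightarrow> 0) (at q0 within S)"
    by (rule tendsto_norm_zero)
  moreover have "0 < e ^ m"
    using \<open>e > 0\<close> by simp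
  ultimately have "eventually (\<lambda>q. norm (pval P m q s0) < e ^ m) (at q0 within S)"
    by (rule order_tendstoD(2))
  then show ?thesis
  proof (rule eventually_mono)
    fix q assume "norm (pval P m q s0) < e ^ m"
    then have "Re s0 - e < abscissa P m q"
      by (rule abscissa_gt_of_norm_pval_less [of P m q, OF monic \<open>e > 0\<close>])
    then show "abscissa P m q0 - e < abscissa P m q"
      using s0(2) by simp
  qed
qed

lemma abscissa_eventually_lt:
  assumes "m \<ge> 1" and monic: "\<And>q. P m q = 1"
    and cont: "\<And>k. k \<le> m \<Longrightarrow> continuous_on S (P k)" and "q0 \<in> S" and "e > 0"
  shows "eventually (\<lambda>q. abscissa P m q < abscissa P m q0 + e) (at q0 within S)"
proof -
  define B where "B = (\<Sum>k<m. \<bar>P k q0\<bar>)"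
  define R where "R = max 1 (B + 1)"
  define D where "D q = (\<Sum>k\<le>m. \<bar>P k q0 - P k q\<bar> * R ^ k)" for q
  have "continuous_on S (\<lambda>q. \<Sum>k<m. \<bar>P k q\<bar>)"
    using cont by (intro continuous_intros) auto
  then have "((\<lambda>q. \<Sum>k<m. \<bar>P k q\<bar>) \<longlongrightarrow> B) (at q0 within S)"
    using \<open>q0 \<in> S\<close> unfolding B_def continuous_on_def by blast
  then have near_B: "eventually (\<lambda>q. (\<Sum>k<m. \<bar>P k q\<bar>) < B + 1) (at q0 within S)"
    by (rule order_tendstoD(2)) simp
  have "continuous_on S D"
    unfolding D_def using cont by (intro continuous_intros) auto
  then have "(D \<longlongrightarrow> D q0) (at q0 within S)"
    using \<open>q0 \<in> S\<close> unfolding continuous_on_def by blast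
  moreover have "D q0 < e ^ m"
    using \<open>e > 0\<close> by (simp add: D_def)
  ultimately have near_0: "eventually (\<lambda>q. D q < e ^ m) (at q0 within S)"
    by (rule order_tendstoD(2))
  from near_B near_0 show ?thesis
  proof (rule eventually_elim2)
    fix q assume q: "(\<Sum>k<m. \<bar>P k q\<bar>) < B + 1" "D q < e ^ m"
    obtain s where s: "pval P m q s = 0" "Re s = abscissa P m q"
      using abscissa_attained [of m P q, OF assms(1) monic] by blast
    have "norm s \<le> max 1 (\<Sum>k<m. \<bar>P k q\<bar>)"
      using monic s(1) by (rule pval_root_norm_le)
    also have "\<dots> \<le> R"
      unfolding R_def using q(1) by (intro max.mono) auto
    finally have "norm s \<le> R" .
    have "norm (pval P m q0 s) = norm (pval P m q0 s - pval P m q s)"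
      using s(1) by simp
    also have "\<dots> \<le> D q"
      unfolding D_def using \<open>norm s \<le> R\<close> by (rule norm_pval_diff_le)
    also have "\<dots> < e ^ m"
      by (rule q(2))
    finally have "Re s - e < abscissa P m q0"
      by (rule abscissa_gt_of_norm_pval_less [of P m q0, OF monic \<open>e > 0\<close>])
    then show "abscissa P m q < abscissa P m q0 + e"
      using s(2) by simp
  qed
qed

lemma continuous_on_abscissa:
  assumes "m \<ge> 1" and "\<And>q. P m q = 1" and "\<And>k. k \<le> m \<Longrightarrow> continuous_on S (P k)"
  shows "continuous_on S (abscissa P m)"
  unfolding continuous_on_def
proof (intro ballI order_tendstoI)
  fix q0 b assume "q0 \<in> S"
  show "eventually (\<lambda>q. b < abscissa P m q) (at q0 within S)" if "b < abscissa P m q0"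
    using abscissa_eventually_gt [of m P S q0 "abscissa P m q0 - b", OF assms \<open>q0 \<in> S\<close>] that
    by simp
  show "eventually (\<lambda>q. abscissa P m q < b) (at q0 within S)" if "abscissa P m q0 < b"
    using abscissa_eventually_lt [of m P S q0 "b - abscissa P m q0", OF assms \<open>q0 \<in> S\<close>] that
    by simp
qed

lemma continuous_on_mpoly_fun: "mpoly_fun f \<Longrightarrow> continuous_on S f"
  unfolding mpoly_fun_def by (elim exE conjE, hypsubst) (intro continuous_intros)

lemma Qbox_eq_cbox: "Qbox = cbox (- 1) (1 :: real ^ 'n)"
  unfolding Qbox_def by (auto simp: mem_box_cart)

lemma mem_Zset_iff: "(q, x, y) \<in> Zset P m \<longleftrightarrow> q \<in> Qbox \<and> pval P m q (Complex x y) = 0"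
  by (simp add: Zset_def pRe_def pIm_def complex_eq_iff)

definition feasible :: "(nat \<Rightarrow> real ^ 'n \<Rightarrow> real) \<Rightarrow> nat \<Rightarrow> (real ^ 'n \<Rightarrow> real) \<Rightarrow> bool" where
  "feasible P m v \<longleftrightarrow> continuous_on Qbox v \<and> (\<forall>(q, x, y) \<in> Zset P m. v q - x \<ge> 0)"

lemma rho_eq_Inf_feasible: "rho P m = Inf (integral Qbox ` {v. feasible P m v})"
  unfolding rho_def feasible_def by (simp add: setcompr_eq_image)

lemma feasible_abscissa:
  assumes "m \<ge> 1" and "\<And>q. P m q = 1" and "\<And>k. k \<le> m \<Longrightarrow> continuous_on Qbox (P k)"
  shows "feasible P m (abscissa P m)"
proof -
  have "abscissa P m q - x \<ge> 0" if "(q, x, y) \<in> Zset P m" for q x y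
  proof -
    have "pval P m q (Complex x y) = 0"
      using that by (simp add: mem_Zset_iff)
    then show ?thesis
      using abscissa_ge [of P m q "Complex x y"] assms(2) by simp
  qed
  then show ?thesis
    unfolding feasible_def using continuous_on_abscissa [of m P, OF assms] by blast
qed

lemma abscissa_le_feasible:
  assumes "m \<ge> 1" and "P m q = 1" and "q \<in> Qbox" and "feasible P m v"
  shows "abscissa P m q \<le> v q"
proof -
  obtain s where s: "pval P m q s = 0" "Re s = abscissa P m q"
    using abscissa_attained [of m P q, OF assms(1,2)] by blast
  have "(q, Re s, Im s) \<in> Zset P m"
    using \<open>q \<in> Qbox\<close> s(1) by (simp add: mem_Zset_iff)
  then have "v q - Re s \<ge> 0"
    using \<open>feasible P m v\<close> unfolding feasible_def by fastforce
  with s(2) show ?thesis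
    by simp
qed

lemma integrable_on_Qbox:
  fixes f :: "real ^ 'n \<Rightarrow> 'a :: banach"
  shows "continuous_on Qbox f \<Longrightarrow> f integrable_on Qbox"
  unfolding Qbox_eq_cbox by (rule integrable_continuous)

lemma integrable_on_feasible: "feasible P m v \<Longrightarrow> v integrable_on Qbox"
  unfolding feasible_def by (blast intro: integrable_on_Qbox)

lemma integral_abscissa_le_feasible:
  assumes "m \<ge> 1" and "\<And>q. P m q = 1"
    and "feasible P m (abscissa P m)" and "feasible P m v"
  shows "integral Qbox (abscissa P m) \<le> integral Qbox v"
proof (rule integral_le)
  show "abscissa P m integrable_on Qbox"
    using assms(3) by (rule integrable_on_feasible)
  show "v integrable_on Qbox"
    using assms(4) by (rule integrable_on_feasible)
  show "abscissa P m q \<le> v q" if "q \<in> Qbox" for q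
    using abscissa_le_feasible [of m P q v, OF assms(1,2) that assms(4)] .
qed

theorem mainTheorem2:
  fixes P :: "nat \<Rightarrow> real ^ 'n \<Rightarrow> real" and m :: nat
  assumes "m \<ge> 1"
    and "\<And>k. k \<le> m \<Longrightarrow> mpoly_fun (P k)"
    and "P m = (\<lambda>_. 1)"
  shows "rho P m = integral Qbox (abscissa P m)"
proof -
  have monic: "\<And>q. P m q = 1"
    using assms(3) by simp
  have feasible: "feasible P m (abscissa P m)"
    using feasible_abscissa [of m P, OF assms(1) monic] assms(2) continuous_on_mpoly_fun by blast
  show ?thesis
    unfolding rho_eq_Inf_feasible
  proof (rule cInf_eq_minimum)
    show "integral Qbox (abscissa P m) \<in> integral Qbox ` {v. feasible P m v}"
      using feasible by (intro imageI) simp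
    show "integral Qbox (abscissa P m) \<le> z" if "z \<in> integral Qbox ` {v. feasible P m v}" for z
      using that integral_abscissa_le_feasible [of m P, OF assms(1) monic feasible] by auto
  qed
qed

end
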